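(* Let $F\colon\Omega\to\Omega$ be a piecewise translation in $\mathbb{R}^d$ with $m=d+1$ branches, translation vectors $v_0,\dots,v_d$ with $v_1-v_0,\dots,v_d-v_0$ linearly independent, and suppose the torus rotation $R$ is ergodic. For $\phi\in\mathbb{T}$ let $\xi(\phi)=\#\big(\pi^{-1}(\phi)\cap A\big)$. Then $\xi$ is constant (and finite) for Lebesgue-almost every $\phi\in\mathbb{T}$.
   Context: A region is a compact subset of $\mathbb{R}^d$ which equals the closure of its interior. A piecewise translation with $m$ branches: $\Omega\subset\mathbb{R}^d$ is a region, $\Omega=P_0\cup\dots\cup P_{m-1}$ with each $P_i$ a region, distinct $P_i$ intersecting only in boundaries, $\mathrm{Leb}(\partial P_i)=0$; vectors $v_i$ satisfy $x+v_i\in\Omega$ for $x\in P_i$; $i(x)$ is an index with $x\in P_{i(x)}$ (boundary ambiguity resolved by a fixed measurable rule), and $F(x)=x+v_{i(x)}$. $\Omega_0=\Omega$, $\Omega_n=\overline{F(\Omega_{n-1})}$, $A=\bigcap_n\Omega_n$ is the attractor. $\mathcal{L}$ is the lattice generated by $v_1-v_0,\dots,v_d-v_0$, $\mathbb{T}=\mathbb{R}^d/\mathcal{L}$, $\pi\colon\mathbb{R}^d\to\mathbb{T}$ the projection, $R(\phi)=\phi+\pi(v_0)$ on $\mathbb{T}$. *)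

theory Defs
  imports "HOL-Analysis.Analysis"
begin

definition region :: "'a::euclidean_space set \<Rightarrow> bool" where
  "region S \<longleftrightarrow> compact S \<and> closure (interior S) = S"

definition piecewise_translation ::
  "'a::euclidean_space set \<Rightarrow> nat \<Rightarrow> (nat \<Rightarrow> 'a set) \<Rightarrow> (nat \<Rightarrow> 'a) \<Rightarrow> ('a \<Rightarrow> nat) \<Rightarrow> bool" where
  "piecewise_translation \<Omega> m P v idx \<longleftrightarrow>
     region \<Omega> \<and> \<Omega> = (\<Union>i<m. P i) \<and>
     (\<forall>i<m. region (P i)) \<and>
     (\<forall>i<m. \<forall>j<m. i \<noteq> j \<longrightarrow> P i \<inter> P j \<subseteq> frontier (P i) \<inter> frontier (P j)) \<and>
     (\<forall>i<m. frontier (P i) \<in> null_sets lebesgue) \<and>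
     (\<forall>i<m. \<forall>x\<in>P i. x + v i \<in> \<Omega>) \<and>
     (\<forall>x\<in>\<Omega>. idx x < m \<and> x \<in> P (idx x)) \<and>
     idx \<in> measurable lebesgue (count_space UNIV)"

definition pw_map :: "(nat \<Rightarrow> 'a::euclidean_space) \<Rightarrow> ('a \<Rightarrow> nat) \<Rightarrow> 'a \<Rightarrow> 'a" where
  "pw_map v idx x = x + v (idx x)"

definition Omega_n :: "('a::euclidean_space \<Rightarrow> 'a) \<Rightarrow> 'a set \<Rightarrow> nat \<Rightarrow> 'a set" where
  "Omega_n F \<Omega> n = ((\<lambda>S. closure (F ` S)) ^^ n) \<Omega>"

definition attractor :: "('a::euclidean_space \<Rightarrow> 'a) \<Rightarrow> 'a set \<Rightarrow> 'a set" where
  "attractor F \<Omega> = (\<Inter>n. Omega_n F \<Omega> n)"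

definition trans_lattice :: "nat \<Rightarrow> (nat \<Rightarrow> 'a::euclidean_space) \<Rightarrow> 'a set" where
  "trans_lattice d v = {\<Sum>i\<in>{1..d}. of_int (k i) *\<^sub>R (v i - v 0) | k. True}"

text \<open>Ergodicity of the rotation R(phi) = phi + pi(v_0) on T = R^d / L, w.r.t. Haar
  (normalised Lebesgue) measure, expressed via lifts to R^d: every Lebesgue measurable
  set that is L-periodic (i.e. of the form pi^{-1}(B)) and invariant under translation by v_0
  is null or conull.\<close>
definition rotation_ergodic :: "'a::euclidean_space set \<Rightarrow> 'a \<Rightarrow> bool" where
  "rotation_ergodic L w \<longleftrightarrow>
     (\<forall>E \<in> sets lebesgue. (\<forall>l\<in>L. (\<lambda>x. x + l) ` E = E) \<longrightarrow> (\<lambda>x. x + w) ` E = E \<longrightarrow>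
        E \<in> null_sets lebesgue \<or> (UNIV - E) \<in> null_sets lebesgue)"

text \<open>xi(pi(x)) = card (pi^{-1}(pi x) \<inter> A), lifted to R^d.\<close>
definition fiber :: "'a::euclidean_space set \<Rightarrow> 'a set \<Rightarrow> 'a \<Rightarrow> 'a set" where
  "fiber L A x = (\<lambda>l. x + l) ` L \<inter> A"

end

theory Submission
  imports Defs
begin

text \<open>Let \<open>\<Lambda>\<close> be the lattice and \<open>E\<^sub>k\<close> the set of \<open>x\<close> whose fiber \<open>(x + \<Lambda>) \<inter> A\<close> has at
  least \<open>k\<close> points; these sets are \<open>\<Lambda>\<close>-periodic and measurable. Every point \<open>a\<close> of the
  attractor has a preimage \<open>a - v\<^sub>i \<in> A \<inter> P\<^sub>i\<close>, and \<open>v\<^sub>i - v\<^sub>0 \<in> \<Lambda>\<close>, so \<open>a \<mapsto> a - v\<^sub>i\<close> maps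
  the fiber over \<open>x + v\<^sub>0\<close> into the fiber over \<open>x\<close>; it is injective unless \<open>x + \<Lambda>\<close> meets the
  boundary of a piece, which happens only on a null set. Hence \<open>E\<^sub>k\<close> shrinks under
  translation by \<open>v\<^sub>0\<close> at most by a null set. As translation preserves the finite measure of
  the trace of a periodic set on a fundamental domain, \<open>E\<^sub>k\<close> is invariant up to null sets,
  so by ergodicity it is null or conull. A function into \<open>\<nat>\<close> all of whose superlevel sets
  are null or conull is almost everywhere constant.\<close>

section \<open>Translations and Lebesgue measure\<close>

lemma vimage_translation_eq: "{x. x + a \<in> S} = (+) (- a) ` (S::'a::ab_group_add set)"
  by force

lemma emeasure_lebesgue_vimage_translation:
  "emeasure lebesgue {x. x + a \<in> S} = emeasure lebesgue (S::'a::euclidean_space set)"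
  using emeasure_lebesgue_affine[of 1 "- a" S] by (simp add: vimage_translation_eq)

lemma sets_lebesgue_vimage_translation:
  "S \<in> sets lebesgue \<Longrightarrow> {x. x + a \<in> S} \<in> sets lebesgue" for S :: "'a::euclidean_space set"
  unfolding vimage_translation_eq by (rule lebesgue_sets_translation)

lemma null_sets_lebesgue_vimage_translation:
  "N \<in> null_sets lebesgue \<Longrightarrow> {x. x + a \<in> N} \<in> null_sets lebesgue" for N :: "'a::euclidean_space set"
  by (simp add: null_sets_def sets_lebesgue_vimage_translation emeasure_lebesgue_vimage_translation)

lemma AE_lebesgue_translate:
  fixes a :: "'a::euclidean_space"
  assumes "AE x in lebesgue. P x" shows "AE x in lebesgue. P (x + a)"
proof -
  obtain N where "N \<in> null_sets lebesgue" "{x. \<not> P x} \<subseteq> N"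
    using assms by (auto simp: eventually_ae_filter)
  then show ?thesis
    by (intro AE_I'[of "{x. x + a \<in> N}"]) (auto intro: null_sets_lebesgue_vimage_translation)
qed

section \<open>Periodic sets and ergodicity\<close>

definition lattice_periodic :: "'a::ab_group_add set \<Rightarrow> 'a set \<Rightarrow> bool" where
  "lattice_periodic L E \<longleftrightarrow> (\<forall>l\<in>L. \<forall>x. x + l \<in> E \<longleftrightarrow> x \<in> E)"

lemma lattice_periodicD: "lattice_periodic L E \<Longrightarrow> l \<in> L \<Longrightarrow> x + l \<in> E \<longleftrightarrow> x \<in> E"
  unfolding lattice_periodic_def by blast

lemma translation_image_eqI:
  fixes W :: "'a::ab_group_add set"
  assumes "\<And>x. x + a \<in> W \<longleftrightarrow> x \<in> W"
  shows "(\<lambda>x. x + a) ` W = W"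
proof safe
  fix x assume "x \<in> W"
  then show "x \<in> (\<lambda>x. x + a) ` W"
    using assms[of "x - a"] by (intro image_eqI[where x="x - a"]) auto
qed (use assms in auto)

lemma AE_eq_const_if_superlevel_sets_trivial:
  fixes f :: "'a \<Rightarrow> nat"
  assumes trivial: "\<And>k. (AE x in M. f x < k) \<or> (AE x in M. k \<le> f x)"
    and nontrivial: "emeasure M (space M) \<noteq> 0"
  shows "\<exists>c. AE x in M. f x = c"
proof -
  have not_AE_False: "\<not> (AE x in M. False)"
    using nontrivial by (metis ae_filter_eq_bot_iff eventually_False)
  have "\<exists>k. AE x in M. f x < k"
  proof (rule ccontr)
    assume "\<nexists>k. AE x in M. f x < k"
    then have "AE x in M. \<forall>k. k \<le> f x"
      using trivial by (simp add: AE_all_countable)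
    then have "AE x in M. False"
      by eventually_elim (metis Suc_n_not_le_n)
    with not_AE_False show False ..
  qed
  define k where "k = (LEAST k. AE x in M. f x < k)"
  have below: "AE x in M. f x < k"
    unfolding k_def using \<open>\<exists>k. _\<close> by (rule LeastI_ex)
  have "k \<noteq> 0"
  proof
    assume "k = 0"
    with below have "AE x in M. False" by simp
    with not_AE_False show False ..
  qed
  then have "\<not> (AE x in M. f x < k - 1)"
    unfolding k_def by (intro not_less_Least) simp
  then have "AE x in M. k - 1 \<le> f x"
    using trivial by blast
  with below have "AE x in M. f x = k - 1"
    by eventually_elim simp
  then show ?thesis ..
qed

lemma all_int_shift: "(\<forall>n::int. P (n + 1)) \<longleftrightarrow> (\<forall>n. P n)"
  by (metis diff_add_cancel)

lemma AE_translate_int_iterate: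
  fixes w :: "'a::euclidean_space"
  assumes inv: "AE x in lebesgue. x + w \<in> E \<longleftrightarrow> x \<in> E"
  shows "AE x in lebesgue. x + of_int n *\<^sub>R w \<in> E \<longleftrightarrow> x \<in> E"
proof (induction n rule: int_induct[where k=0])
  case (step1 n)
  from AE_lebesgue_translate[OF step1(2), of w] inv show ?case
    by eventually_elim (simp add: algebra_simps)
next
  case (step2 n)
  from AE_lebesgue_translate[OF step2(2), of "- w"] AE_lebesgue_translate[OF inv, of "- w"]
  show ?case
    by eventually_elim (simp add: algebra_simps)
qed simp

lemma rotation_ergodic_AE_invariant:
  fixes E :: "'a::euclidean_space set"
  assumes erg: "rotation_ergodic L w" and E: "E \<in> sets lebesgue"
    and per: "lattice_periodic L E" and inv: "AE x in lebesgue. x + w \<in> E \<longleftrightarrow> x \<in> E"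
  shows "(AE x in lebesgue. x \<notin> E) \<or> (AE x in lebesgue. x \<in> E)"
proof -
  define W where "W = {x. \<forall>n::int. x + of_int n *\<^sub>R w \<in> E}"
  have W_eq: "W = (\<Inter>n::int. {x. x + of_int n *\<^sub>R w \<in> E})"
    unfolding W_def by blast
  have "W \<in> sets lebesgue"
    unfolding W_eq using E by (intro sets.countable_INT) (auto intro: sets_lebesgue_vimage_translation)
  moreover have "(\<lambda>x. x + l) ` W = W" if "l \<in> L" for l
  proof (rule translation_image_eqI)
    fix x
    have "x + l + of_int n *\<^sub>R w \<in> E \<longleftrightarrow> x + of_int n *\<^sub>R w \<in> E" for n :: int
    proof -
      have "x + l + of_int n *\<^sub>R w = (x + of_int n *\<^sub>R w) + l"
        by (simp add: algebra_simps)
      then show ?thesis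
        by (simp only: lattice_periodicD[OF per that])
    qed
    then show "x + l \<in> W \<longleftrightarrow> x \<in> W"
      unfolding W_def by simp
  qed
  moreover have "(\<lambda>x. x + w) ` W = W"
  proof (rule translation_image_eqI)
    fix x
    have "(\<forall>n::int. x + w + of_int n *\<^sub>R w \<in> E) \<longleftrightarrow> (\<forall>n::int. x + of_int (n + 1) *\<^sub>R w \<in> E)"
      by (simp add: algebra_simps)
    also have "\<dots> \<longleftrightarrow> (\<forall>n::int. x + of_int n *\<^sub>R w \<in> E)"
      by (rule all_int_shift)
    finally show "x + w \<in> W \<longleftrightarrow> x \<in> W"
      unfolding W_def by simp
  qed
  ultimately have "W \<in> null_sets lebesgue \<or> UNIV - W \<in> null_sets lebesgue"
    using erg unfolding rotation_ergodic_def by simp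
  moreover have "AE x in lebesgue. x \<in> W \<longleftrightarrow> x \<in> E"
  proof -
    have "AE x in lebesgue. \<forall>n::int. x + of_int n *\<^sub>R w \<in> E \<longleftrightarrow> x \<in> E"
      using AE_translate_int_iterate[OF inv] by (simp add: AE_all_countable)
    then show ?thesis
      unfolding W_def by eventually_elim simp
  qed
  ultimately show ?thesis
  proof (elim disjE)
    assume "W \<in> null_sets lebesgue"
    from AE_not_in[OF this] \<open>AE x in lebesgue. x \<in> W \<longleftrightarrow> x \<in> E\<close>
    have "AE x in lebesgue. x \<notin> E"
      by eventually_elim simp
    then show ?thesis ..
  next
    assume "UNIV - W \<in> null_sets lebesgue"
    from AE_not_in[OF this] \<open>AE x in lebesgue. x \<in> W \<longleftrightarrow> x \<in> E\<close>
    have "AE x in lebesgue. x \<in> E"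
      by eventually_elim simp
    then show ?thesis ..
  qed
qed

locale fundamental_domain =
  fixes L :: "'a::euclidean_space set" and D :: "'a set"
  assumes countable_L: "countable L"
    and uminus_L: "l \<in> L \<Longrightarrow> - l \<in> L"
    and sets_D: "D \<in> sets lebesgue"
    and emeasure_D_finite: "emeasure lebesgue D < \<infinity>"
    and tile_exists: "\<exists>l\<in>L. x - l \<in> D"
    and tile_unique: "l \<in> L \<Longrightarrow> l' \<in> L \<Longrightarrow> x - l \<in> D \<Longrightarrow> x - l' \<in> D \<Longrightarrow> l = l'"
begin

lemma emeasure_eq_nn_integral_tiles:
  assumes S: "S \<in> sets lebesgue"
  shows "emeasure lebesgue S = (\<integral>\<^sup>+l. emeasure lebesgue (S \<inter> {x. x + u - l \<in> D}) \<partial>count_space L)"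
proof -
  have "S = (\<Union>l\<in>L. S \<inter> {x. x + u - l \<in> D})"
    using tile_exists by blast
  also have "emeasure lebesgue \<dots> = (\<integral>\<^sup>+l. emeasure lebesgue (S \<inter> {x. x + u - l \<in> D}) \<partial>count_space L)"
  proof (rule emeasure_UN_countable)
    show "disjoint_family_on (\<lambda>l. S \<inter> {x. x + u - l \<in> D}) L"
      unfolding disjoint_family_on_def using tile_unique by blast
    show "S \<inter> {x. x + u - l \<in> D} \<in> sets lebesgue" for l
      using sets_lebesgue_vimage_translation[OF sets_D, of "u - l"] S by (simp add: add_diff_eq)
  qed (rule countable_L)
  finally show ?thesis .
qed

lemma emeasure_translate_Int_D:
  assumes E: "E \<in> sets lebesgue" and per: "lattice_periodic L E"
  shows "emeasure lebesgue ({x. x + w \<in> E} \<inter> D) = emeasure lebesgue (E \<inter> D)"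
proof -
  have G: "{x. x + w \<in> E} \<inter> D \<in> sets lebesgue"
    using sets_lebesgue_vimage_translation[OF E] sets_D by blast
  have "emeasure lebesgue ({x. x + w \<in> E} \<inter> D)
      = (\<integral>\<^sup>+l. emeasure lebesgue ({x. x + w \<in> E} \<inter> D \<inter> {x. x + w - l \<in> D}) \<partial>count_space L)"
    by (rule emeasure_eq_nn_integral_tiles[OF G])
  also have "\<dots> = (\<integral>\<^sup>+l. emeasure lebesgue (E \<inter> D \<inter> {x. x - w + l \<in> D}) \<partial>count_space L)"
  proof (rule nn_integral_cong)
    fix l assume "l \<in> space (count_space L)"
    then have "x + w - l + l \<in> E \<longleftrightarrow> x + w - l \<in> E" for x
      by (intro lattice_periodicD[OF per]) simp
    then have "{x. x + w \<in> E} \<inter> D \<inter> {x. x + w - l \<in> D}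
        = {x. x + (w - l) \<in> E \<inter> D \<inter> {x. x - w + l \<in> D}}"
      by (auto simp: algebra_simps)
    then show "emeasure lebesgue ({x. x + w \<in> E} \<inter> D \<inter> {x. x + w - l \<in> D})
        = emeasure lebesgue (E \<inter> D \<inter> {x. x - w + l \<in> D})"
      by (simp only: emeasure_lebesgue_vimage_translation)
  qed
  also have "\<dots> = (\<integral>\<^sup>+l. emeasure lebesgue (E \<inter> D \<inter> {x. x + - w - l \<in> D}) \<partial>count_space L)"
    using nn_integral_bij_count_space[of uminus L L "\<lambda>l. emeasure lebesgue (E \<inter> D \<inter> {x. x + - w - l \<in> D})"]
    by (simp add: bij_betwI[where g=uminus] uminus_L)
  also have "\<dots> = emeasure lebesgue (E \<inter> D)"
    using emeasure_eq_nn_integral_tiles[of "E \<inter> D" "- w"] E sets_D by simp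
  finally show ?thesis .
qed

lemma periodic_null_if_Int_D_null:
  assumes per: "lattice_periodic L S" and null: "S \<inter> D \<in> null_sets lebesgue"
  shows "S \<in> null_sets lebesgue"
proof -
  have "S = (\<Union>l\<in>L. {x. x + - l \<in> S \<inter> D})"
  proof safe
    fix x assume "x \<in> S"
    obtain l where "l \<in> L" "x - l \<in> D" using tile_exists by blast
    moreover have "x - l \<in> S"
      using lattice_periodicD[OF per \<open>l \<in> L\<close>, of "x - l"] \<open>x \<in> S\<close> by simp
    ultimately show "x \<in> (\<Union>l\<in>L. {x. x + - l \<in> S \<inter> D})" by auto
  next
    fix x l assume "l \<in> L" "x + - l \<in> S"
    then show "x \<in> S"
      using lattice_periodicD[OF per, of l "x - l"] by simp
  qed
  also have "\<dots> \<in> null_sets lebesgue"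
    using null by (intro null_sets_UN' countable_L null_sets_lebesgue_vimage_translation)
  finally show ?thesis .
qed

text \<open>\<open>E\<close> and its translate have the same finite measure on the fundamental domain, so the
  almost-everywhere inclusion is an almost-everywhere equality.\<close>

lemma periodic_subinvariant_AE_invariant:
  assumes E: "E \<in> sets lebesgue" and per: "lattice_periodic L E"
    and sub: "AE x in lebesgue. x + w \<in> E \<longrightarrow> x \<in> E"
  shows "AE x in lebesgue. x + w \<in> E \<longleftrightarrow> x \<in> E"
proof -
  define G where "G = {x. x + w \<in> E}"
  have G: "G \<in> sets lebesgue"
    unfolding G_def using E by (rule sets_lebesgue_vimage_translation)
  have "lattice_periodic L G"
    using per unfolding G_def lattice_periodic_def by (simp add: add.commute add.left_commute)
  then have per_diff: "lattice_periodic L (E - G)"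
    using per unfolding lattice_periodic_def by blast
  have "G - E \<in> null_sets lebesgue"
    using sub G E unfolding G_def by (subst AE_iff_null_sets) (auto elim: AE_mp)
  have [simp]: "E \<inter> G \<inter> D \<in> sets lebesgue" "(E - G) \<inter> D \<in> sets lebesgue"
    using E G sets_D by auto
  have fin: "emeasure lebesgue (E \<inter> G \<inter> D) \<noteq> \<infinity>"
    using emeasure_mono[of "E \<inter> G \<inter> D" D lebesgue] emeasure_D_finite sets_D by auto
  have "emeasure lebesgue (E \<inter> G \<inter> D) + emeasure lebesgue ((E - G) \<inter> D) = emeasure lebesgue (E \<inter> D)"
    by (subst plus_emeasure) (auto intro!: arg_cong[where f="emeasure lebesgue"])
  also have "\<dots> = emeasure lebesgue (G \<inter> D)"
    unfolding G_def by (rule emeasure_translate_Int_D[OF E per, symmetric])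
  also have "\<dots> \<le> emeasure lebesgue ((E \<inter> G \<inter> D) \<union> (G - E))"
    using E G by (intro emeasure_mono sets.Un sets.Diff) auto
  also have "\<dots> = emeasure lebesgue (E \<inter> G \<inter> D)"
    using \<open>G - E \<in> null_sets lebesgue\<close> by (intro emeasure_Un_null_set) (auto simp: E G sets_D)
  finally have "emeasure lebesgue ((E - G) \<inter> D) = 0"
    using fin by (simp add: ennreal_add_left_cancel_le)
  then have "(E - G) \<inter> D \<in> null_sets lebesgue"
    by (auto simp: null_sets_def E G sets_D)
  then have "E - G \<in> null_sets lebesgue"
    by (rule periodic_null_if_Int_D_null[OF per_diff])
  from AE_not_in[OF this] AE_not_in[OF \<open>G - E \<in> null_sets lebesgue\<close>] show ?thesis
    unfolding G_def by eventually_elim blast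
qed

lemma rotation_ergodic_subinvariant:
  assumes "rotation_ergodic L w" "E \<in> sets lebesgue" "lattice_periodic L E"
    and "AE x in lebesgue. x + w \<in> E \<longrightarrow> x \<in> E"
  shows "(AE x in lebesgue. x \<notin> E) \<or> (AE x in lebesgue. x \<in> E)"
  using assms by (intro rotation_ergodic_AE_invariant periodic_subinvariant_AE_invariant)

end

section \<open>The lattice spanned by the translation vectors\<close>

locale lattice_coordinates =
  fixes v :: "nat \<Rightarrow> 'a::euclidean_space" and c :: "nat \<Rightarrow> 'a \<Rightarrow> real"
  assumes linear_coord: "linear (c i)"
    and coord_basis: "i \<in> {1..DIM('a)} \<Longrightarrow> j \<in> {1..DIM('a)} \<Longrightarrow> c i (v j - v 0) = (if i = j then 1 else 0)"
    and coord_expansion: "x = (\<Sum>i\<in>{1..DIM('a)}. c i x *\<^sub>R (v i - v 0))"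
begin

abbreviation lattice :: "'a set" where
  "lattice \<equiv> trans_lattice DIM('a) v"

lemma lattice_mem: "(\<Sum>i\<in>{1..DIM('a)}. of_int (k i) *\<^sub>R (v i - v 0)) \<in> lattice"
  unfolding trans_lattice_def by blast

lemma lattice_add:
  assumes "x \<in> lattice" "y \<in> lattice"
  shows "x + y \<in> lattice"
proof -
  obtain k k' where "x = (\<Sum>i\<in>{1..DIM('a)}. of_int (k i) *\<^sub>R (v i - v 0))"
    and "y = (\<Sum>i\<in>{1..DIM('a)}. of_int (k' i) *\<^sub>R (v i - v 0))"
    using assms unfolding trans_lattice_def by blast
  then have "x + y = (\<Sum>i\<in>{1..DIM('a)}. of_int (k i + k' i) *\<^sub>R (v i - v 0))"
    by (simp add: sum.distrib scaleR_add_left)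
  then show ?thesis
    by (simp only: lattice_mem)
qed

lemma lattice_uminus:
  assumes "x \<in> lattice"
  shows "- x \<in> lattice"
proof -
  obtain k where "x = (\<Sum>i\<in>{1..DIM('a)}. of_int (k i) *\<^sub>R (v i - v 0))"
    using assms unfolding trans_lattice_def by blast
  then have "- x = (\<Sum>i\<in>{1..DIM('a)}. of_int (- k i) *\<^sub>R (v i - v 0))"
    by (simp add: sum_negf)
  then show ?thesis
    by (simp only: lattice_mem)
qed

lemma lattice_diff: "x \<in> lattice \<Longrightarrow> y \<in> lattice \<Longrightarrow> x - y \<in> lattice"
  using lattice_add[of x "- y"] lattice_uminus[of y] by simp

lemma lattice_basis_vector:
  assumes "i \<le> DIM('a)"
  shows "v i - v 0 \<in> lattice"
proof (cases "i = 0")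
  case True
  then show ?thesis
    using lattice_mem[of "\<lambda>_. 0"] by simp
next
  case False
  then have "(\<Sum>j\<in>{1..DIM('a)}. of_int (if j = i then 1 else 0) *\<^sub>R (v j - v 0))
      = (\<Sum>j\<in>{1..DIM('a)}. if j = i then v j - v 0 else 0)"
    by (intro sum.cong) auto
  also have "\<dots> = v i - v 0"
    using False assms by simp
  finally show ?thesis
    by (metis lattice_mem)
qed

lemma coord_sum:
  assumes "j \<in> {1..DIM('a)}"
  shows "c j (\<Sum>i\<in>{1..DIM('a)}. r i *\<^sub>R (v i - v 0)) = r j"
proof -
  have "c j (\<Sum>i\<in>{1..DIM('a)}. r i *\<^sub>R (v i - v 0)) = (\<Sum>i\<in>{1..DIM('a)}. r i * c j (v i - v 0))"
    by (simp add: linear_sum[OF linear_coord] linear_scale[OF linear_coord])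
  also have "\<dots> = (\<Sum>i\<in>{1..DIM('a)}. if i = j then r i else 0)"
    using coord_basis[OF assms] by (intro sum.cong) auto
  also have "\<dots> = r j"
    using assms by simp
  finally show ?thesis .
qed

lemma coord_lattice_Ints:
  assumes "l \<in> lattice" "j \<in> {1..DIM('a)}"
  shows "c j l \<in> \<int>"
proof -
  obtain k where "l = (\<Sum>i\<in>{1..DIM('a)}. of_int (k i) *\<^sub>R (v i - v 0))"
    using assms(1) unfolding trans_lattice_def by blast
  then show ?thesis
    by (simp only: coord_sum[OF assms(2)] Ints_of_int)
qed

lemma coord_inject:
  assumes "\<And>j. j \<in> {1..DIM('a)} \<Longrightarrow> c j x = c j y"
  shows "x = y"
  by (subst coord_expansion, subst (2) coord_expansion) (rule sum.cong, auto simp: assms)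

lemma countable_lattice: "countable lattice"
proof -
  have "lattice \<subseteq> (\<lambda>k. \<Sum>i\<in>{1..DIM('a)}. of_int (k i) *\<^sub>R (v i - v 0)) ` (\<Pi>\<^sub>E i\<in>{1..DIM('a)}. UNIV)"
  proof
    fix x assume "x \<in> lattice"
    then obtain k where k: "x = (\<Sum>i\<in>{1..DIM('a)}. of_int (k i) *\<^sub>R (v i - v 0))"
      unfolding trans_lattice_def by blast
    also have "\<dots> = (\<Sum>i\<in>{1..DIM('a)}. of_int (restrict k {1..DIM('a)} i) *\<^sub>R (v i - v 0))"
      by (rule sum.cong) auto
    finally show "x \<in> (\<lambda>k. \<Sum>i\<in>{1..DIM('a)}. of_int (k i) *\<^sub>R (v i - v 0)) ` (\<Pi>\<^sub>E i\<in>{1..DIM('a)}. UNIV)"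
      by (intro image_eqI[where x="restrict k {1..DIM('a)}"]) auto
  qed
  then show ?thesis
    by (rule countable_subset) (simp add: countable_PiE)
qed

lemma finite_lattice_Int_cball: "finite (lattice \<inter> cball 0 R)"
proof -
  define N where "N i = \<lceil>onorm (c i) * R\<rceil>" for i
  have bl: "bounded_linear (c i)" for i
    using linear_coord linear_conv_bounded_linear by blast
  have "lattice \<inter> cball 0 R
      \<subseteq> (\<lambda>k. \<Sum>i\<in>{1..DIM('a)}. of_int (k i) *\<^sub>R (v i - v 0)) ` (\<Pi>\<^sub>E i\<in>{1..DIM('a)}. {- N i..N i})"
  proof
    fix l assume l: "l \<in> lattice \<inter> cball 0 R"
    define k where "k = restrict (\<lambda>i. \<lfloor>c i l\<rfloor>) {1..DIM('a)}"
    have ck: "of_int (k i) = c i l" if "i \<in> {1..DIM('a)}" for i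
      using coord_lattice_Ints[of l i] l that unfolding k_def by (auto elim!: Ints_cases)
    have "l = (\<Sum>i\<in>{1..DIM('a)}. of_int (k i) *\<^sub>R (v i - v 0))"
      by (subst coord_expansion) (rule sum.cong, auto simp: ck)
    moreover have "k i \<in> {- N i..N i}" if i: "i \<in> {1..DIM('a)}" for i
    proof -
      have "\<bar>c i l\<bar> \<le> onorm (c i) * norm l"
        using onorm[OF bl] by (metis real_norm_def)
      also have "\<dots> \<le> onorm (c i) * R"
        using l onorm_pos_le[OF bl] by (auto intro: mult_left_mono)
      finally have "\<bar>of_int (k i)\<bar> \<le> onorm (c i) * R"
        using ck[OF i] by simp
      then show ?thesis
        unfolding N_def using le_of_int_ceiling[of "onorm (c i) * R"] by simp linarith
    qed
    then have "k \<in> (\<Pi>\<^sub>E i\<in>{1..DIM('a)}. {- N i..N i})"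
      unfolding k_def by auto
    ultimately show "l \<in> (\<lambda>k. \<Sum>i\<in>{1..DIM('a)}. of_int (k i) *\<^sub>R (v i - v 0)) ` (\<Pi>\<^sub>E i\<in>{1..DIM('a)}. {- N i..N i})"
      by blast
  qed
  then show ?thesis
    by (rule finite_subset) (simp add: finite_PiE)
qed

definition cell :: "'a set" where
  "cell = {x. \<forall>i\<in>{1..DIM('a)}. 0 \<le> c i x \<and> c i x < 1}"

lemma cell_tile_exists: "\<exists>l\<in>lattice. x - l \<in> cell"
proof
  define l where "l = (\<Sum>i\<in>{1..DIM('a)}. of_int \<lfloor>c i x\<rfloor> *\<^sub>R (v i - v 0))"
  show "l \<in> lattice"
    unfolding l_def by (rule lattice_mem)
  have "c j (x - l) = c j x - of_int \<lfloor>c j x\<rfloor>" if "j \<in> {1..DIM('a)}" for j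
    using linear_diff[OF linear_coord] coord_sum[OF that] unfolding l_def by simp
  moreover have "0 \<le> y - of_int \<lfloor>y\<rfloor> \<and> y - of_int \<lfloor>y\<rfloor> < 1" for y :: real
    using floor_correct[of y] by linarith
  ultimately show "x - l \<in> cell"
    unfolding cell_def by simp
qed

lemma cell_tile_unique:
  assumes "l \<in> lattice" "l' \<in> lattice" "x - l \<in> cell" "x - l' \<in> cell"
  shows "l = l'"
proof (rule coord_inject)
  fix j assume j: "j \<in> {1..DIM('a)}"
  have floor: "c j m = of_int \<lfloor>c j x\<rfloor>" if m: "m \<in> lattice" and xm: "x - m \<in> cell" for m
  proof -
    obtain z where z: "c j m = of_int z"
      using coord_lattice_Ints[OF m j] by (auto elim!: Ints_cases)
    have "0 \<le> c j x - c j m" "c j x - c j m < 1"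
      using xm j linear_diff[OF linear_coord] unfolding cell_def by auto
    then have "\<lfloor>c j x\<rfloor> = z"
      using z by (intro floor_unique) auto
    then show ?thesis
      using z by simp
  qed
  show "c j l = c j l'"
    using floor[OF assms(1,3)] floor[OF assms(2,4)] by simp
qed

lemma sets_cell: "cell \<in> sets lebesgue"
proof -
  have [measurable]: "c i \<in> borel_measurable borel" for i
    using linear_coord
    by (intro borel_measurable_continuous_onI linear_continuous_on) (simp add: linear_conv_bounded_linear)
  have "cell \<in> sets borel"
    unfolding cell_def by measurable
  then show ?thesis
    by (metis sets_completionI_sets sets_lborel)
qed

lemma bounded_cell: "bounded cell"
proof -
  have "norm x \<le> (\<Sum>i\<in>{1..DIM('a)}. norm (v i - v 0))" if "x \<in> cell" for x
  proof -
    have "norm x = norm (\<Sum>i\<in>{1..DIM('a)}. c i x *\<^sub>R (v i - v 0))"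
      by (subst coord_expansion) simp
    also have "\<dots> \<le> (\<Sum>i\<in>{1..DIM('a)}. \<bar>c i x\<bar> * norm (v i - v 0))"
      by (rule order_trans[OF norm_sum]) simp
    also have "\<dots> \<le> (\<Sum>i\<in>{1..DIM('a)}. norm (v i - v 0))"
      using that unfolding cell_def by (intro sum_mono mult_left_le_one_le) fastforce+
    finally show ?thesis .
  qed
  then show ?thesis
    unfolding bounded_iff by blast
qed

sublocale fundamental_domain lattice cell
proof
  show "emeasure lebesgue cell < \<infinity>"
    using fmeasurableD2[OF bounded_set_imp_lmeasurable[OF bounded_cell sets_cell]] by (simp add: less_top[symmetric])
qed (use countable_lattice lattice_uminus sets_cell cell_tile_exists cell_tile_unique in auto)

end

lemma lattice_coordinates_exist:
  fixes v :: "nat \<Rightarrow> 'a::euclidean_space"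
  assumes ind: "independent ((\<lambda>i. v i - v 0) ` {1..DIM('a)})"
    and inj: "inj_on (\<lambda>i. v i - v 0) {1..DIM('a)}"
  obtains c where "lattice_coordinates v c"
proof -
  define b where "b i = v i - v 0" for i
  define B where "B = b ` {1..DIM('a)}"
  have "\<exists>g::'a \<Rightarrow> real. linear g \<and> (\<forall>x\<in>B. g x = (if x = b i then 1 else 0))" for i
    using ind unfolding B_def b_def by (intro real_vector.linear_independent_extend) simp
  then obtain c :: "nat \<Rightarrow> 'a \<Rightarrow> real"
    where lin: "\<And>i. linear (c i)" and c_B: "\<And>i x. x \<in> B \<Longrightarrow> c i x = (if x = b i then 1 else 0)"
    by metis
  have c_b: "c i (b j) = (if i = j then 1 else 0)" if "i \<in> {1..DIM('a)}" "j \<in> {1..DIM('a)}" for i j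
    using c_B[of "b j" i] inj_on_eq_iff[OF inj that(2,1)] that(2) unfolding B_def b_def by auto
  have "card B = DIM('a)"
    unfolding B_def b_def using inj by (simp add: card_image)
  then have span_B: "span B = UNIV"
    using ind eucl.card_ge_dim_independent[of B UNIV] by (auto simp: B_def b_def dim_UNIV)
  have expansion: "x = (\<Sum>i\<in>{1..DIM('a)}. c i x *\<^sub>R b i)" for x
  proof -
    have "linear (\<lambda>x. \<Sum>i\<in>{1..DIM('a)}. c i x *\<^sub>R b i)"
      by (intro linearI)
        (simp_all add: linear_add[OF lin] linear_scale[OF lin] scaleR_add_left sum.distrib scaleR_sum_right)
    then have "id x = (\<Sum>i\<in>{1..DIM('a)}. c i x *\<^sub>R b i)"
    proof (rule linear_eq_on_span[OF linear_id])
      fix y assume "y \<in> B"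
      then obtain j where j: "j \<in> {1..DIM('a)}" "y = b j"
        unfolding B_def by auto
      then have "(\<Sum>i\<in>{1..DIM('a)}. c i y *\<^sub>R b i) = (\<Sum>i\<in>{1..DIM('a)}. if i = j then b i else 0)"
        using c_b by (intro sum.cong) auto
      then show "id y = (\<Sum>i\<in>{1..DIM('a)}. c i y *\<^sub>R b i)"
        using j by simp
    qed (simp add: span_B)
    then show ?thesis
      by simp
  qed
  have "lattice_coordinates v c"
    using lin c_b expansion unfolding b_def by (intro lattice_coordinates.intro) auto
  then show ?thesis ..
qed

section \<open>The attractor\<close>

lemma Omega_n_0 [simp]: "Omega_n F \<Omega> 0 = \<Omega>"
  by (simp add: Omega_n_def)

lemma Omega_n_Suc [simp]: "Omega_n F \<Omega> (Suc n) = closure (F ` Omega_n F \<Omega> n)"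
  by (simp add: Omega_n_def)

lemma closed_Omega_n: "closed \<Omega> \<Longrightarrow> closed (Omega_n F \<Omega> n)"
  by (cases n) simp_all

lemma Omega_n_antimono:
  assumes "closed \<Omega>" "F ` \<Omega> \<subseteq> \<Omega>" "m \<le> n"
  shows "Omega_n F \<Omega> n \<subseteq> Omega_n F \<Omega> m"
proof -
  have "Omega_n F \<Omega> (Suc k) \<subseteq> Omega_n F \<Omega> k" for k
  proof (induction k)
    case 0
    then show ?case
      using assms by (simp add: closure_minimal)
  next
    case (Suc k)
    then show ?case
      by (simp add: closure_mono image_mono)
  qed
  then show ?thesis
    using lift_Suc_antimono_le[of "Omega_n F \<Omega>"] assms(3) by blast
qed

lemma attractor_subset_Omega_n: "attractor F \<Omega> \<subseteq> Omega_n F \<Omega> n"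
  unfolding attractor_def by blast

lemma closed_attractor: "closed \<Omega> \<Longrightarrow> closed (attractor F \<Omega>)"
  unfolding attractor_def by (intro closed_INT ballI closed_Omega_n)

lemma pw_map_image_subset:
  assumes "piecewise_translation \<Omega> m P v idx"
  shows "pw_map v idx ` \<Omega> \<subseteq> \<Omega>"
  using assms unfolding piecewise_translation_def pw_map_def by fastforce

lemma compact_attractor:
  assumes "piecewise_translation \<Omega> m P v idx"
  shows "compact (attractor (pw_map v idx) \<Omega>)"
proof -
  have "compact \<Omega>"
    using assms unfolding piecewise_translation_def region_def by blast
  then show ?thesis
    using attractor_subset_Omega_n[of _ \<Omega> 0]
    by (metis Omega_n_0 closed_attractor compact_Int_closed compact_imp_closed inf.absorb_iff2)
qed

text \<open>If \<open>a - v i\<close> left \<open>\<Omega>\<^sub>n \<inter> P i\<close> at some stage \<open>n\<^sub>i\<close> for every branch \<open>i\<close>, then \<open>a\<close>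
  would lie outside the closed set \<open>\<Union>\<^sub>i (v i + (\<Omega>\<^sub>K \<inter> P i)) \<supseteq> \<Omega>\<^bsub>K+1\<^esub>\<close> for \<open>K = \<Sum>\<^sub>i n\<^sub>i\<close>.\<close>

lemma attractor_preimage:
  assumes pt: "piecewise_translation \<Omega> m P v idx" and a: "a \<in> attractor (pw_map v idx) \<Omega>"
  obtains i where "i < m" "a - v i \<in> attractor (pw_map v idx) \<Omega>" "a - v i \<in> P i"
proof -
  let ?F = "pw_map v idx" and ?\<Omega>n = "Omega_n (pw_map v idx) \<Omega>"
  have closed_\<Omega>: "closed \<Omega>" and closed_P: "\<And>i. i < m \<Longrightarrow> closed (P i)"
    and idx: "\<And>x. x \<in> \<Omega> \<Longrightarrow> idx x < m \<and> x \<in> P (idx x)"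
    using pt unfolding piecewise_translation_def region_def by (auto intro: compact_imp_closed)
  have anti: "k \<le> n \<Longrightarrow> ?\<Omega>n n \<subseteq> ?\<Omega>n k" for k n
    using Omega_n_antimono[OF closed_\<Omega> pw_map_image_subset[OF pt]] .
  show ?thesis
  proof (rule ccontr)
    assume "\<not> ?thesis"
    then have "\<forall>i<m. \<exists>n. a - v i \<notin> ?\<Omega>n n \<inter> P i"
      using that unfolding attractor_def by blast
    then obtain n where n: "\<And>i. i < m \<Longrightarrow> a - v i \<notin> ?\<Omega>n (n i) \<inter> P i"
      by metis
    define K where "K = (\<Sum>i<m. n i)"
    have "?F ` ?\<Omega>n K \<subseteq> (\<Union>i<m. (+) (v i) ` (?\<Omega>n K \<inter> P i))"
    proof
      fix y assume "y \<in> ?F ` ?\<Omega>n K"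
      then obtain x where x: "x \<in> ?\<Omega>n K" "y = ?F x"
        by blast
      then have "idx x < m" "x \<in> P (idx x)"
        using idx anti[of 0 K] by auto
      then show "y \<in> (\<Union>i<m. (+) (v i) ` (?\<Omega>n K \<inter> P i))"
        using x unfolding pw_map_def by (auto simp: add.commute)
    qed
    moreover have "closed (\<Union>i<m. (+) (v i) ` (?\<Omega>n K \<inter> P i))"
      using closed_Omega_n[OF closed_\<Omega>] closed_P by (intro closed_UN ballI closed_translation closed_Int) auto
    ultimately have "?\<Omega>n (Suc K) \<subseteq> (\<Union>i<m. (+) (v i) ` (?\<Omega>n K \<inter> P i))"
      by (simp add: closure_minimal)
    moreover have "a \<in> ?\<Omega>n (Suc K)"
      using a attractor_subset_Omega_n by blast
    ultimately obtain i where i: "i < m" "a - v i \<in> ?\<Omega>n K \<inter> P i"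
      by auto
    moreover have "n i \<le> K"
      unfolding K_def using i(1) by (intro member_le_sum) auto
    ultimately show False
      using n anti by blast
  qed
qed

section \<open>Fibers over the torus\<close>

lemma mem_fiber_iff: "y \<in> fiber L A x \<longleftrightarrow> y - x \<in> L \<and> y \<in> A"
  unfolding fiber_def by (auto intro: image_eqI[where x="y - x"])

lemma sets_card_fiber_ge:
  fixes A :: "'a::euclidean_space set"
  assumes L: "countable L" and A: "closed A" and fin: "\<And>x. finite (fiber L A x)"
  shows "{x. k \<le> card (fiber L A x)} \<in> sets lebesgue"
proof -
  let ?T = "{T. finite T \<and> T \<subseteq> L \<and> card T = k}"
  have "{x. k \<le> card (fiber L A x)} = (\<Union>T\<in>?T. \<Inter>l\<in>T. (+) (- l) ` A)"
  proof (intro set_eqI iffI)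
    fix x assume "x \<in> {x. k \<le> card (fiber L A x)}"
    then obtain S where S: "S \<subseteq> fiber L A x" "card S = k" "finite S"
      using obtain_subset_with_card_n by (metis mem_Collect_eq)
    have "(\<lambda>y. y - x) ` S \<in> ?T"
      using S by (auto simp: mem_fiber_iff card_image inj_on_def)
    moreover have "x \<in> (\<Inter>l\<in>(\<lambda>y. y - x) ` S. (+) (- l) ` A)"
      using S by (auto simp: mem_fiber_iff intro: image_eqI)
    ultimately show "x \<in> (\<Union>T\<in>?T. \<Inter>l\<in>T. (+) (- l) ` A)"
      by blast
  next
    fix x assume "x \<in> (\<Union>T\<in>?T. \<Inter>l\<in>T. (+) (- l) ` A)"
    then obtain T where T: "T \<in> ?T" "\<forall>l\<in>T. x + l \<in> A"
      by force
    then have "(+) x ` T \<subseteq> fiber L A x"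
      by (auto simp: mem_fiber_iff)
    then have "card ((+) x ` T) \<le> card (fiber L A x)"
      by (rule card_mono[OF fin])
    then show "x \<in> {x. k \<le> card (fiber L A x)}"
      using T by (simp add: card_image)
  qed
  also have "\<dots> \<in> sets borel"
  proof (rule sets.countable_UN'')
    show "countable ?T"
      by (rule countable_subset[OF _ countable_Collect_finite_subset[OF L]]) blast
  qed (intro borel_closed closed_INT ballI closed_translation A)
  finally show ?thesis
    by (metis sets_completionI_sets sets_lborel)
qed

context lattice_coordinates
begin

lemma fiber_lattice_translate: "l \<in> lattice \<Longrightarrow> fiber lattice A (x + l) = fiber lattice A x"
  unfolding mem_fiber_iff set_eq_iff
  by (metis diff_add_cancel diff_diff_eq lattice_add lattice_diff)

lemma finite_fiber_lattice:
  assumes "bounded A"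
  shows "finite (fiber lattice A x)"
proof -
  obtain R where R: "\<And>a. a \<in> A \<Longrightarrow> norm a \<le> R"
    using assms unfolding bounded_iff by blast
  have "fiber lattice A x \<subseteq> (+) x ` (lattice \<inter> cball 0 (R + norm x))"
  proof
    fix y assume "y \<in> fiber lattice A x"
    then have "y - x \<in> lattice" "norm (y - x) \<le> R + norm x"
      using R[of y] norm_triangle_ineq4[of y x] by (auto simp: mem_fiber_iff)
    then show "y \<in> (+) x ` (lattice \<inter> cball 0 (R + norm x))"
      by (intro image_eqI[where x="y - x"]) auto
  qed
  then show ?thesis
    using finite_lattice_Int_cball finite_subset by blast
qed

text \<open>Taking each point of the attractor to its preimage \<open>a - v\<^sub>i\<close> maps the fiber over
  \<open>x + v\<^sub>0\<close> into the fiber over \<open>x\<close>, since \<open>v\<^sub>i - v\<^sub>0\<close> lies in the lattice. Two points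
  can only be identified at a common boundary point of two pieces, and the lattice translates
  of the (null) union of the boundaries form a null set.\<close>

lemma AE_card_fiber_shift_le:
  assumes pt: "piecewise_translation \<Omega> (DIM('a) + 1) P v idx"
  defines "A \<equiv> attractor (pw_map v idx) \<Omega>"
  shows "AE x in lebesgue. card (fiber lattice A (x + v 0)) \<le> card (fiber lattice A x)"
proof -
  let ?m = "DIM('a) + 1"
  define Z where "Z = (\<Union>i<?m. frontier (P i))"
  have "Z \<in> null_sets lebesgue"
    using pt unfolding Z_def piecewise_translation_def by (intro null_sets_UN') auto
  then have null: "(\<Union>l\<in>lattice. {x. x + l \<in> Z}) \<in> null_sets lebesgue"
    by (intro null_sets_UN' countable_lattice null_sets_lebesgue_vimage_translation)
  have overlap: "P i \<inter> P j \<subseteq> Z" if "i < ?m" "j < ?m" "i \<noteq> j" for i j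
    using pt that unfolding Z_def piecewise_translation_def by blast
  have "\<exists>i. i < ?m \<and> a - v i \<in> A \<and> a - v i \<in> P i" if "a \<in> A" for a
    using attractor_preimage[OF pt] that unfolding A_def by metis
  then obtain br where br: "\<And>a. a \<in> A \<Longrightarrow> br a < ?m \<and> a - v (br a) \<in> A \<and> a - v (br a) \<in> P (br a)"
    by metis
  define g where "g a = a - v (br a)" for a
  have "card (fiber lattice A (x + v 0)) \<le> card (fiber lattice A x)"
    if x: "\<forall>l\<in>lattice. x + l \<notin> Z" for x
  proof (rule card_inj_on_le)
    show "finite (fiber lattice A x)"
      using compact_attractor[OF pt] unfolding A_def by (intro finite_fiber_lattice compact_imp_bounded)
    show maps_to: "g ` fiber lattice A (x + v 0) \<subseteq> fiber lattice A x"
    proof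
      fix b assume "b \<in> g ` fiber lattice A (x + v 0)"
      then obtain a where a: "a - (x + v 0) \<in> lattice" "a \<in> A" "b = g a"
        by (auto simp: mem_fiber_iff)
      have "b - x = (a - (x + v 0)) - (v (br a) - v 0)"
        unfolding a(3) g_def by (simp add: algebra_simps)
      also have "\<dots> \<in> lattice"
        using br[OF a(2)] by (intro lattice_diff a(1) lattice_basis_vector) simp
      finally show "b \<in> fiber lattice A x"
        using br[OF a(2)] by (simp add: mem_fiber_iff a(3) g_def)
    qed
    show "inj_on g (fiber lattice A (x + v 0))"
    proof (rule inj_onI)
      fix a a' assume a: "a \<in> fiber lattice A (x + v 0)" and a': "a' \<in> fiber lattice A (x + v 0)"
        and eq: "g a = g a'"
      show "a = a'"
      proof (cases "br a = br a'")
        case True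
        then show ?thesis
          using eq by (simp add: g_def)
      next
        case False
        have "g a \<in> P (br a)" "g a' \<in> P (br a')"
          using br a a' by (simp_all add: mem_fiber_iff g_def)
        then have "g a \<in> P (br a) \<inter> P (br a')"
          using eq by simp
        then have "g a \<in> Z"
          using overlap[OF _ _ False] br a a' by (auto simp: mem_fiber_iff)
        moreover have "g a \<in> fiber lattice A x"
          using maps_to a by blast
        ultimately show ?thesis
          using x by (metis mem_fiber_iff add.commute diff_add_cancel)
      qed
    qed
  qed
  then show ?thesis
    by (intro AE_I'[OF null]) auto
qed

end

theorem theorem2p2:
  fixes \<Omega> :: "'a::euclidean_space set"
    and P :: "nat \<Rightarrow> 'a set" and v :: "nat \<Rightarrow> 'a" and idx :: "'a \<Rightarrow> nat"
  assumes "piecewise_translation \<Omega> (DIM('a) + 1) P v idx"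
    and "independent ((\<lambda>i. v i - v 0) ` {1..DIM('a)})"
    and "inj_on (\<lambda>i. v i - v 0) {1..DIM('a)}"
    and "rotation_ergodic (trans_lattice DIM('a) v) (v 0)"
  shows "\<exists>c::nat. AE x in lebesgue.
           finite (fiber (trans_lattice DIM('a) v) (attractor (pw_map v idx) \<Omega>) x) \<and>
           card (fiber (trans_lattice DIM('a) v) (attractor (pw_map v idx) \<Omega>) x) = c"
proof -
  obtain coord where "lattice_coordinates v coord"
    using lattice_coordinates_exist[OF assms(2,3)] .
  then interpret lattice_coordinates v coord .
  define A where "A = attractor (pw_map v idx) \<Omega>"
  have "compact A"
    unfolding A_def by (rule compact_attractor[OF assms(1)])
  then have finite: "finite (fiber lattice A x)" for x
    by (intro finite_fiber_lattice compact_imp_bounded)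
  have "(AE x in lebesgue. card (fiber lattice A x) < k) \<or> (AE x in lebesgue. k \<le> card (fiber lattice A x))" for k
  proof -
    let ?E = "{x. k \<le> card (fiber lattice A x)}"
    have "?E \<in> sets lebesgue"
      using \<open>compact A\<close> by (intro sets_card_fiber_ge countable_lattice compact_imp_closed finite)
    moreover have "lattice_periodic lattice ?E"
      unfolding lattice_periodic_def by (simp add: fiber_lattice_translate)
    moreover have "AE x in lebesgue. x + v 0 \<in> ?E \<longrightarrow> x \<in> ?E"
      using AE_card_fiber_shift_le[OF assms(1)] unfolding A_def by eventually_elim auto
    ultimately have "(AE x in lebesgue. x \<notin> ?E) \<or> (AE x in lebesgue. x \<in> ?E)"
      by (rule rotation_ergodic_subinvariant[OF assms(4)])
    then show ?thesis
      by (simp add: not_le)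
  qed
  then have "\<exists>n. AE x in lebesgue. card (fiber lattice A x) = n"
    by (rule AE_eq_const_if_superlevel_sets_trivial) simp
  then show ?thesis
    unfolding A_def[symmetric] using finite by simp
qed

end
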